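(* Let $Q$ be a right Leibniz algebra over a field $\mathbb{F}$ and let $L$ be a subalgebra of $Q$. Then $Q$ is an algebra of quotients of $L$ if and only if $Q$ is ideally absorbed into $L$.
   Context: A right Leibniz algebra is a vector space with a bilinear bracket satisfying $[x,[y,z]]=[[x,y],z]-[[x,z],y]$ for all $x,y,z$. An ideal $I$ of $L$ is a subspace with $[I,L]\subseteq I$ and $[L,I]\subseteq I$. For $H\subseteq L$, $\mathrm{Ann}_L(H)=\{x\in L: [x,y]=[y,x]=0\ \forall y\in H\}$. For $x\in L$ let $R_x,L_x$ be the operators on $Q$ given by $R_x(u)=[u,x]$, $L_x(u)=[x,u]$, and let $\mathscr{A}(L)$ be the associative algebra (under composition) generated by $\{R_x,L_y: x,y\in L\}$. For $q\in Q$ put ${}_L(q)=\mathbb{F}q+\{\sum_{i=1}^n\xi_i(q): \xi_i\in\mathscr{A}(L), n\in\mathbb{N}\}$ and $(L:q)=\{x\in L: [x,{}_L(q)]\subseteq L,\ [{}_L(q),x]\subseteq L\}$. $Q$ is an algebra of quotients of $L$ if for all $p,q\in Q$ with $p\neq 0$ there exists $x\in(L:q)$ with $[x,p]\neq 0$, or there exists $y\in (L:q)$ with $[p,y]\neq0$. $Q$ is ideally absorbed into $L$ if for each $0\neq q\in Q$ there exists an ideal $I$ of $L$ with $\mathrm{Ann}_L(I)=\{0\}$ such that $[I,q]\neq\{0\}$ or $[q,I]\neq\{0\}$, and both $[I,q]\subseteq L$ and $[q,I]\subseteq L$. *)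

theory Defs
  imports Main "HOL.Vector_Spaces"
begin

text \<open>The ambient algebra Q is the whole type 'q.\<close>

definition right_leibniz_algebra ::
  "('f::field \<Rightarrow> 'q::ab_group_add \<Rightarrow> 'q) \<Rightarrow> ('q \<Rightarrow> 'q \<Rightarrow> 'q) \<Rightarrow> bool" where
  "right_leibniz_algebra sc br \<longleftrightarrow>
     vector_space sc \<and>
     (\<forall>x y z. br (x + y) z = br x z + br y z) \<and>
     (\<forall>x y z. br x (y + z) = br x y + br x z) \<and>
     (\<forall>c x y. br (sc c x) y = sc c (br x y)) \<and>
     (\<forall>c x y. br x (sc c y) = sc c (br x y)) \<and>
     (\<forall>x y z. br x (br y z) = br (br x y) z - br (br x z) y)"

definition subalgebra ::
  "('f::field \<Rightarrow> 'q::ab_group_add \<Rightarrow> 'q) \<Rightarrow> ('q \<Rightarrow> 'q \<Rightarrow> 'q) \<Rightarrow> 'q set \<Rightarrow> bool" where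
  "subalgebra sc br L \<longleftrightarrow> module.subspace sc L \<and> (\<forall>x\<in>L. \<forall>y\<in>L. br x y \<in> L)"

definition is_ideal ::
  "('f::field \<Rightarrow> 'q::ab_group_add \<Rightarrow> 'q) \<Rightarrow> ('q \<Rightarrow> 'q \<Rightarrow> 'q) \<Rightarrow> 'q set \<Rightarrow> 'q set \<Rightarrow> bool" where
  "is_ideal sc br L I \<longleftrightarrow> module.subspace sc I \<and> I \<subseteq> L \<and>
     (\<forall>i\<in>I. \<forall>x\<in>L. br i x \<in> I \<and> br x i \<in> I)"

definition Ann :: "('q::zero \<Rightarrow> 'q \<Rightarrow> 'q) \<Rightarrow> 'q set \<Rightarrow> 'q set \<Rightarrow> 'q set" where
  "Ann br L H = {x\<in>L. \<forall>y\<in>H. br x y = 0 \<and> br y x = 0}"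

inductive_set opalg ::
  "('f::field \<Rightarrow> 'q::ab_group_add \<Rightarrow> 'q) \<Rightarrow> ('q \<Rightarrow> 'q \<Rightarrow> 'q) \<Rightarrow> 'q set \<Rightarrow> ('q \<Rightarrow> 'q) set"
  for sc br L where
  R_gen: "x \<in> L \<Longrightarrow> (\<lambda>u. br u x) \<in> opalg sc br L"
| L_gen: "y \<in> L \<Longrightarrow> (\<lambda>u. br y u) \<in> opalg sc br L"
| comp: "f \<in> opalg sc br L \<Longrightarrow> g \<in> opalg sc br L \<Longrightarrow> f \<circ> g \<in> opalg sc br L"
| add: "f \<in> opalg sc br L \<Longrightarrow> g \<in> opalg sc br L \<Longrightarrow> (\<lambda>u. f u + g u) \<in> opalg sc br L"
| smult: "f \<in> opalg sc br L \<Longrightarrow> (\<lambda>u. sc c (f u)) \<in> opalg sc br L"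

definition gen_set ::
  "('f::field \<Rightarrow> 'q::ab_group_add \<Rightarrow> 'q) \<Rightarrow> ('q \<Rightarrow> 'q \<Rightarrow> 'q) \<Rightarrow> 'q set \<Rightarrow> 'q \<Rightarrow> 'q set" where
  "gen_set sc br L q = {sc c q + (\<Sum>i<n. \<xi> i q) | c (n::nat) \<xi>. \<forall>i<n. \<xi> i \<in> opalg sc br L}"

definition colon ::
  "('f::field \<Rightarrow> 'q::ab_group_add \<Rightarrow> 'q) \<Rightarrow> ('q \<Rightarrow> 'q \<Rightarrow> 'q) \<Rightarrow> 'q set \<Rightarrow> 'q \<Rightarrow> 'q set" where
  "colon sc br L q = {x\<in>L. \<forall>u\<in>gen_set sc br L q. br x u \<in> L \<and> br u x \<in> L}"

definition algebra_of_quotients ::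
  "('f::field \<Rightarrow> 'q::ab_group_add \<Rightarrow> 'q) \<Rightarrow> ('q \<Rightarrow> 'q \<Rightarrow> 'q) \<Rightarrow> 'q set \<Rightarrow> bool" where
  "algebra_of_quotients sc br L \<longleftrightarrow>
     (\<forall>p q. p \<noteq> 0 \<longrightarrow>
        (\<exists>x\<in>colon sc br L q. br x p \<noteq> 0) \<or> (\<exists>y\<in>colon sc br L q. br p y \<noteq> 0))"

definition ideally_absorbed ::
  "('f::field \<Rightarrow> 'q::ab_group_add \<Rightarrow> 'q) \<Rightarrow> ('q \<Rightarrow> 'q \<Rightarrow> 'q) \<Rightarrow> 'q set \<Rightarrow> bool" where
  "ideally_absorbed sc br L \<longleftrightarrow>
     (\<forall>q. q \<noteq> 0 \<longrightarrow>
        (\<exists>I. is_ideal sc br L I \<and> Ann br L I = {0} \<and>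
             ((\<lambda>i. br i q) ` I \<noteq> {0} \<or> (\<lambda>i. br q i) ` I \<noteq> {0}) \<and>
             (\<lambda>i. br i q) ` I \<subseteq> L \<and> (\<lambda>i. br q i) ` I \<subseteq> L))"

end

theory Submission
  imports Defs
begin

text \<open>For an ideal \<open>I\<close> of \<open>L\<close>, the elements \<open>u\<close> with \<open>[I,u], [u,I] \<subseteq> L\<close> form a subspace
  that is stable under brackets with \<open>L\<close> (by the Leibniz identity), so it contains \<open>\<^sub>L(q)\<close>
  as soon as it contains \<open>q\<close>. Hence every ideal \<open>I\<close> with \<open>[I,q], [q,I] \<subseteq> L\<close> lies in
  \<open>(L:q)\<close>, which is itself such an ideal. Algebra of quotients says that no \<open>(L:q)\<close> kills a nonzero
  \<open>p \<in> Q\<close>; in particular \<open>(L:q)\<close> has zero annihilator in \<open>L\<close> and does not kill \<open>q\<close>, so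
  \<open>I = (L:q)\<close> witnesses ideal absorption.
  Conversely, if \<open>(L:q)\<close> killed some \<open>p \<noteq> 0\<close>, so would the ideal \<open>J \<subseteq> (L:q)\<close> with zero
  annihilator provided by absorption, and then, by the Leibniz identity, \<open>J\<close> would also kill
  the elements \<open>[i,p], [p,i] \<in> L\<close> for \<open>i\<close> in the ideal absorbing \<open>p\<close>; so these vanish,
  contradicting the choice of that ideal.\<close>

locale right_leibniz =
  fixes sc :: "'f::field \<Rightarrow> 'q::ab_group_add \<Rightarrow> 'q"
    and br :: "'q \<Rightarrow> 'q \<Rightarrow> 'q"
  assumes right_leibniz: "right_leibniz_algebra sc br"
begin

sublocale V: vector_space sc
  using right_leibniz unfolding right_leibniz_algebra_def by blast

lemma bracket_add_left: "br (x + y) z = br x z + br y z"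
  and bracket_add_right: "br x (y + z) = br x y + br x z"
  and bracket_scale_left: "br (sc c x) y = sc c (br x y)"
  and bracket_scale_right: "br x (sc c y) = sc c (br x y)"
  and leibniz: "br x (br y z) = br (br x y) z - br (br x z) y"
  using right_leibniz unfolding right_leibniz_algebra_def by blast+

lemma bracket_bracket_right: "br (br x y) z = br x (br y z) + br (br x z) y"
  using leibniz[of x y z] by (simp add: algebra_simps)

lemma bracket_zero_left [simp]: "br 0 y = 0"
  using bracket_add_left[of 0 0 y] by simp

lemma bracket_zero_right [simp]: "br x 0 = 0"
  using bracket_add_right[of x 0 0] by simp

lemma annihilated_bracket:
  assumes kill_p: "\<And>j. j \<in> J \<Longrightarrow> br j p = 0 \<and> br p j = 0"
    and stable: "\<And>j. j \<in> J \<Longrightarrow> br j i \<in> J \<and> br i j \<in> J"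
    and j: "j \<in> J"
  shows "br j (br i p) = 0" "br (br i p) j = 0" "br j (br p i) = 0" "br (br p i) j = 0"
proof -
  have "br (br j i) p = 0" "br (br i j) p = 0" "br p (br i j) = 0" "br p (br j i) = 0"
    using kill_p stable[OF j] by blast+
  moreover have "br j p = 0" "br p j = 0"
    using kill_p[OF j] by blast+
  ultimately show "br j (br i p) = 0" "br (br i p) j = 0" "br j (br p i) = 0" "br (br p i) j = 0"
    unfolding leibniz[of j i p] bracket_bracket_right[of i p j]
      leibniz[of j p i] bracket_bracket_right[of p i j]
    by simp_all
qed

end

locale right_leibniz_subalgebra = right_leibniz sc br
  for sc :: "'f::field \<Rightarrow> 'q::ab_group_add \<Rightarrow> 'q" and br +
  fixes L :: "'q set"
  assumes subalgebra: "subalgebra sc br L"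
begin

lemma subspace_L: "V.subspace L"
  and bracket_closed: "x \<in> L \<Longrightarrow> y \<in> L \<Longrightarrow> br x y \<in> L"
  using subalgebra unfolding subalgebra_def by blast+

lemma zero_in_L: "0 \<in> L"
  and add_in_L: "x \<in> L \<Longrightarrow> y \<in> L \<Longrightarrow> x + y \<in> L"
  and diff_in_L: "x \<in> L \<Longrightarrow> y \<in> L \<Longrightarrow> x - y \<in> L"
  and scale_in_L: "x \<in> L \<Longrightarrow> sc c x \<in> L"
  using subspace_L V.subspace_0 V.subspace_add V.subspace_diff V.subspace_scale by blast+

lemma ideal_subset: "is_ideal sc br L I \<Longrightarrow> I \<subseteq> L"
  and ideal_bracket: "is_ideal sc br L I \<Longrightarrow> i \<in> I \<Longrightarrow> x \<in> L \<Longrightarrow> br i x \<in> I \<and> br x i \<in> I"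
  unfolding is_ideal_def by blast+

lemma zero_in_ideal: "is_ideal sc br L I \<Longrightarrow> 0 \<in> I"
  unfolding is_ideal_def using V.subspace_0 by blast

lemma Ann_eq_zeroD:
  assumes "Ann br L J = {0}" and "a \<in> L" and "\<And>j. j \<in> J \<Longrightarrow> br a j = 0 \<and> br j a = 0"
  shows "a = 0"
  using assms unfolding Ann_def by blast

lemma opalg_preserves:
  assumes S: "V.subspace S"
    and stable: "\<And>u l. u \<in> S \<Longrightarrow> l \<in> L \<Longrightarrow> br u l \<in> S \<and> br l u \<in> S"
    and \<xi>: "\<xi> \<in> opalg sc br L"
  shows "u \<in> S \<Longrightarrow> \<xi> u \<in> S"
  using \<xi> by (induction arbitrary: u) (auto simp: stable V.subspace_add[OF S] V.subspace_scale[OF S])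

lemma gen_set_subset:
  assumes S: "V.subspace S"
    and stable: "\<And>u l. u \<in> S \<Longrightarrow> l \<in> L \<Longrightarrow> br u l \<in> S \<and> br l u \<in> S"
    and q: "q \<in> S"
  shows "gen_set sc br L q \<subseteq> S"
  unfolding gen_set_def
  using opalg_preserves[OF S stable _ q] V.subspace_scale[OF S q]
  by (auto intro!: V.subspace_add[OF S] V.subspace_sum[OF S])

lemma opalg_zero: "(\<lambda>u. 0) \<in> opalg sc br L"
  using opalg.R_gen[where sc = sc and br = br, OF zero_in_L] by simp

lemma opalg_sum: "(\<And>i. i < (n::nat) \<Longrightarrow> \<xi> i \<in> opalg sc br L) \<Longrightarrow> (\<lambda>u. \<Sum>i<n. \<xi> i u) \<in> opalg sc br L"
  by (induction n) (simp_all add: opalg_zero opalg.add)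

lemma gen_set_eq: "gen_set sc br L q = {sc c q + \<eta> q | c \<eta>. \<eta> \<in> opalg sc br L}"
proof (intro equalityI subsetI)
  fix u assume "u \<in> gen_set sc br L q"
  then obtain c and n :: nat and \<xi> where u_eq: "u = sc c q + (\<Sum>i<n. \<xi> i q)"
    and "\<forall>i<n. \<xi> i \<in> opalg sc br L"
    unfolding gen_set_def by blast
  then have "(\<lambda>v. \<Sum>i<n. \<xi> i v) \<in> opalg sc br L"
    by (simp add: opalg_sum)
  then show "u \<in> {sc c q + \<eta> q | c \<eta>. \<eta> \<in> opalg sc br L}"
    unfolding u_eq by (intro CollectI exI[of _ c] exI[of _ "\<lambda>v. \<Sum>i<n. \<xi> i v"]) simp
next
  fix u assume "u \<in> {sc c q + \<eta> q | c \<eta>. \<eta> \<in> opalg sc br L}"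
  then obtain c \<eta> where "u = sc c q + \<eta> q" "\<eta> \<in> opalg sc br L"
    by blast
  then show "u \<in> gen_set sc br L q"
    unfolding gen_set_def by (intro CollectI exI[of _ c] exI[of _ 1] exI[of _ "\<lambda>_. \<eta>"]) simp
qed

lemma self_in_gen_set: "q \<in> gen_set sc br L q"
  unfolding gen_set_eq by (intro CollectI exI[of _ 1] exI[of _ "\<lambda>u. 0"]) (simp add: opalg_zero)

lemma gen_set_bracket:
  assumes u: "u \<in> gen_set sc br L q" and l: "l \<in> L"
  shows "br u l \<in> gen_set sc br L q" "br l u \<in> gen_set sc br L q"
proof -
  obtain c \<eta> where u_eq: "u = sc c q + \<eta> q" and \<eta>: "\<eta> \<in> opalg sc br L"
    using u unfolding gen_set_eq by blast
  have "(\<lambda>v. sc c (br v l) + ((\<lambda>v. br v l) \<circ> \<eta>) v) \<in> opalg sc br L"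
    using l \<eta> by (intro opalg.intros)
  then show "br u l \<in> gen_set sc br L q"
    unfolding gen_set_eq u_eq by (force simp: bracket_add_left bracket_scale_left)
  have "(\<lambda>v. sc c (br l v) + ((\<lambda>v. br l v) \<circ> \<eta>) v) \<in> opalg sc br L"
    using l \<eta> by (intro opalg.intros)
  then show "br l u \<in> gen_set sc br L q"
    unfolding gen_set_eq u_eq by (force simp: bracket_add_right bracket_scale_right)
qed

definition absorbed :: "'q set \<Rightarrow> 'q set" where
  "absorbed I = {u. \<forall>i\<in>I. br i u \<in> L \<and> br u i \<in> L}"

lemma subspace_absorbed: "V.subspace (absorbed I)"
  unfolding absorbed_def V.subspace_def
  by (simp add: zero_in_L add_in_L scale_in_L bracket_add_left bracket_add_right bracket_scale_left bracket_scale_right)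

lemma absorbed_bracket:
  assumes I: "is_ideal sc br L I" and u: "u \<in> absorbed I" and l: "l \<in> L"
  shows "br u l \<in> absorbed I \<and> br l u \<in> absorbed I"
proof -
  have "br i (br u l) \<in> L \<and> br (br u l) i \<in> L \<and> br i (br l u) \<in> L \<and> br (br l u) i \<in> L"
    if i: "i \<in> I" for i
  proof -
    have "br i u \<in> L" "br u i \<in> L" "br (br i l) u \<in> L" "br u (br l i) \<in> L" "br (br l i) u \<in> L"
      using u ideal_bracket[OF I i l] i unfolding absorbed_def by blast+
    then show ?thesis
      unfolding leibniz[of i u l] bracket_bracket_right[of u l i]
        leibniz[of i l u] bracket_bracket_right[of l u i]
      using l by (simp add: bracket_closed add_in_L diff_in_L)
  qed
  then show ?thesis
    unfolding absorbed_def by blast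
qed

lemma ideal_subset_colon:
  assumes I: "is_ideal sc br L I" and q: "q \<in> absorbed I"
  shows "I \<subseteq> colon sc br L q"
proof -
  have "gen_set sc br L q \<subseteq> absorbed I"
    using subspace_absorbed absorbed_bracket[OF I] q by (rule gen_set_subset)
  then show ?thesis
    using ideal_subset[OF I] unfolding colon_def absorbed_def by blast
qed

lemma absorbed_colon: "q \<in> absorbed (colon sc br L q)"
  using self_in_gen_set unfolding absorbed_def colon_def by blast

lemma is_ideal_colon: "is_ideal sc br L (colon sc br L q)"
proof -
  have "br x l \<in> colon sc br L q \<and> br l x \<in> colon sc br L q"
    if x: "x \<in> colon sc br L q" and l: "l \<in> L" for x l
  proof -
    have xL: "x \<in> L" and x_gen: "\<And>u. u \<in> gen_set sc br L q \<Longrightarrow> br x u \<in> L \<and> br u x \<in> L"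
      using x unfolding colon_def by blast+
    have "br (br x l) u \<in> L \<and> br u (br x l) \<in> L \<and> br (br l x) u \<in> L \<and> br u (br l x) \<in> L"
      if u: "u \<in> gen_set sc br L q" for u
      unfolding bracket_bracket_right[of x l u] leibniz[of u x l]
        bracket_bracket_right[of l x u] leibniz[of u l x]
      using x_gen[OF u] x_gen[OF gen_set_bracket(1)[OF u l]] x_gen[OF gen_set_bracket(2)[OF u l]] l
      by (simp add: bracket_closed add_in_L diff_in_L)
    then show ?thesis
      using xL l bracket_closed unfolding colon_def by blast
  qed
  moreover have "V.subspace (colon sc br L q)"
    unfolding colon_def V.subspace_def
    by (simp add: zero_in_L add_in_L scale_in_L bracket_add_left bracket_add_right bracket_scale_left bracket_scale_right)
  ultimately show ?thesis
    unfolding is_ideal_def colon_def by blast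
qed

lemma algebra_of_quotientsD:
  assumes "algebra_of_quotients sc br L" and "p \<noteq> 0"
  obtains x where "x \<in> colon sc br L q" and "br x p \<noteq> 0 \<or> br p x \<noteq> 0"
  using assms unfolding algebra_of_quotients_def by blast

lemma Ann_colon_if_algebra_of_quotients:
  assumes quot: "algebra_of_quotients sc br L"
  shows "Ann br L (colon sc br L q) = {0}"
proof (intro equalityI subsetI)
  fix p assume p: "p \<in> Ann br L (colon sc br L q)"
  show "p \<in> {0}"
  proof (rule ccontr)
    assume "p \<notin> {0}"
    then obtain x where "x \<in> colon sc br L q" and "br x p \<noteq> 0 \<or> br p x \<noteq> 0"
      using algebra_of_quotientsD[OF quot] by blast
    with p show False
      unfolding Ann_def by blast
  qed
qed (simp add: Ann_def zero_in_L)

lemma ideally_absorbed_if_algebra_of_quotients: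
  assumes quot: "algebra_of_quotients sc br L"
  shows "ideally_absorbed sc br L"
  unfolding ideally_absorbed_def
proof (intro allI impI)
  fix q :: 'q assume "q \<noteq> 0"
  let ?I = "colon sc br L q"
  obtain x where "x \<in> ?I" and "br x q \<noteq> 0 \<or> br q x \<noteq> 0"
    using algebra_of_quotientsD[OF quot \<open>q \<noteq> 0\<close>] by blast
  then have "(\<lambda>i. br i q) ` ?I \<noteq> {0} \<or> (\<lambda>i. br q i) ` ?I \<noteq> {0}"
    by (metis image_eqI singletonD)
  moreover have "(\<lambda>i. br i q) ` ?I \<subseteq> L" "(\<lambda>i. br q i) ` ?I \<subseteq> L"
    using absorbed_colon[of q] unfolding absorbed_def by blast+
  ultimately show "\<exists>I. is_ideal sc br L I \<and> Ann br L I = {0} \<and>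
      ((\<lambda>i. br i q) ` I \<noteq> {0} \<or> (\<lambda>i. br q i) ` I \<noteq> {0}) \<and>
      (\<lambda>i. br i q) ` I \<subseteq> L \<and> (\<lambda>i. br q i) ` I \<subseteq> L"
    using is_ideal_colon Ann_colon_if_algebra_of_quotients[OF quot] by (intro exI[of _ ?I]) simp
qed

lemma dense_ideal_subset_colon:
  fixes p q :: 'q
  assumes absorb: "ideally_absorbed sc br L" and "p \<noteq> 0"
  shows "\<exists>J. is_ideal sc br L J \<and> Ann br L J = {0} \<and> J \<subseteq> colon sc br L q"
proof -
  \<comment> \<open>Every ideal absorbs \<open>q = 0\<close>, so in that case the ideal absorbing \<open>p\<close> will do.\<close>
  define r where "r = (if q = 0 then p else q)"
  have "r \<noteq> 0"
    using \<open>p \<noteq> 0\<close> unfolding r_def by simp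
  then obtain J where J: "is_ideal sc br L J" "Ann br L J = {0}"
    and absorbs: "(\<lambda>i. br i r) ` J \<subseteq> L" "(\<lambda>i. br r i) ` J \<subseteq> L"
    using absorb unfolding ideally_absorbed_def by meson
  have "q \<in> absorbed J"
  proof (cases "q = 0")
    case True
    then show ?thesis
      unfolding absorbed_def by (simp add: zero_in_L)
  next
    case False
    then show ?thesis
      using absorbs unfolding absorbed_def r_def by auto
  qed
  then show ?thesis
    using J ideal_subset_colon by blast
qed

lemma algebra_of_quotients_if_ideally_absorbed:
  assumes absorb: "ideally_absorbed sc br L"
  shows "algebra_of_quotients sc br L"
  unfolding algebra_of_quotients_def
proof (intro allI impI)
  fix p q :: 'q assume "p \<noteq> 0"
  show "(\<exists>x\<in>colon sc br L q. br x p \<noteq> 0) \<or> (\<exists>y\<in>colon sc br L q. br p y \<noteq> 0)"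
  proof (rule ccontr)
    assume "\<not> ?thesis"
    then have colon_kills_p: "\<And>j. j \<in> colon sc br L q \<Longrightarrow> br j p = 0 \<and> br p j = 0"
      by blast
    obtain J where J: "is_ideal sc br L J" "Ann br L J = {0}" and "J \<subseteq> colon sc br L q"
      using dense_ideal_subset_colon[OF absorb \<open>p \<noteq> 0\<close>] by blast
    with colon_kills_p have J_kills_p: "\<And>j. j \<in> J \<Longrightarrow> br j p = 0 \<and> br p j = 0"
      by blast
    obtain I where I: "is_ideal sc br L I"
      and nonzero: "(\<lambda>i. br i p) ` I \<noteq> {0} \<or> (\<lambda>i. br p i) ` I \<noteq> {0}"
      and absorbs: "(\<lambda>i. br i p) ` I \<subseteq> L" "(\<lambda>i. br p i) ` I \<subseteq> L"
      using absorb \<open>p \<noteq> 0\<close> unfolding ideally_absorbed_def by meson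
    have "br i p = 0 \<and> br p i = 0" if i: "i \<in> I" for i
    proof -
      have stable: "\<And>j. j \<in> J \<Longrightarrow> br j i \<in> J \<and> br i j \<in> J"
        using ideal_bracket[OF J(1)] ideal_subset[OF I] i by blast
      show ?thesis
        using annihilated_bracket[OF J_kills_p stable] Ann_eq_zeroD[OF J(2)] absorbs i
        by blast
    qed
    then show False
      using nonzero zero_in_ideal[OF I] by auto
  qed
qed

end

theorem theorem3p10:
  fixes sc :: "'f::field \<Rightarrow> 'q::ab_group_add \<Rightarrow> 'q"
    and br :: "'q \<Rightarrow> 'q \<Rightarrow> 'q"
    and L :: "'q set"
  assumes "right_leibniz_algebra sc br"
    and "subalgebra sc br L"
  shows "algebra_of_quotients sc br L \<longleftrightarrow> ideally_absorbed sc br L"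
proof -
  interpret right_leibniz_subalgebra sc br L
    using assms by unfold_locales
  show ?thesis
    using ideally_absorbed_if_algebra_of_quotients algebra_of_quotients_if_ideally_absorbed by blast
qed

end
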